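(* Fix a decision epoch $k$, a look-ahead length $\ell\ge 1$ with $\mathcal T=\{0,\dots,\ell-1\}$, and a finite scenario set $\Omega_k$. Fix scenario-independent first-period delivery quantities $\bar u=(\bar u^{iv})_{i\in\mathcal N,v\in\mathcal V}$ with $\bar u^{iv}\ge 0$. For each scenario $\omega\in\Omega_k$, let $\mathrm{OS}(\omega;\bar u)$ denote problem $\mathrm{OS}(\omega)$ (defined in the context) with the additional constraints $u^{iv\omega}_{k,k}=\bar u^{iv}$ for all $i\in\mathcal N$, $v\in\mathcal V$, and assume $\mathrm{OS}(\omega;\bar u)$ has an optimal solution for every $\omega\in\Omega_k$. Let $Z^*(\omega)$ be the set of first-period routing vectors $(z^{ijv\omega}_{k,k})_{(i,j)\in E,v\in\mathcal V}$ that occur as the period-$k$ routing component of some optimal solution of $\mathrm{OS}(\omega;\bar u)$. Then $Z^*(\omega)=Z^*(\omega')$ for all $\omega,\omega'\in\Omega_k$. In other words, consistency of the first-period delivery variables $\mathbf u$ across all scenarios implies that a common (scenario-independent) optimal first-period routing $\mathbf z$ exists and the sets of optimal first-period routings coincide across scenarios.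
   Context: Retailers $\mathcal N=\{1,\dots,N\}$, warehouse $0$, $\mathcal N^+=\mathcal N\cup\{0\}$; edge set $E=\{(i,j): i,j\in\mathcal N^+, i\ne j\}$ with costs $c_{ij}\ge 0$; $\xi^+(i)$ (resp. $\xi^-(i)$) is the set of edges in $E$ starting (resp. ending) at $i$. Vehicles $\mathcal V=\{1,\dots,V\}$ with capacity $Q$; retailer inventory capacity $I^{\max}$; holding cost $h\ge0$, backorder cost $e\ge0$; $M$ a large constant; $x^+=\max\{x,0\}$, $x^-=\max\{-x,0\}$. Given initial inventories $\hat I^{i}_{k,k}$ (common to all scenarios) and, for scenario $\omega$, predicted demands $\hat y^{i\omega}_{k,k+t}\ge 0$, the single-scenario problem $\mathrm{OS}(\omega)$ has binary variables $z^{ijv\omega}_{k,k+t}$ (vehicle $v$ traverses edge $(i,j)$ in period $k+t$), nonnegative variables $u^{iv\omega}_{k,k+t}$ (quantity delivered to retailer $i$ by vehicle $v$ in period $k+t$), and inventory variables $\hat I^{i\omega}_{k,k+t}$, $t\in\mathcal T$ (plus $\hat I^{i\omega}_{k,k+\ell}$). It minimizes $\sum_{t\in\mathcal T}\sum_{(i,j)\in E}\sum_{v\in\mathcal V}c_{ij}z^{ijv\omega}_{k,k+t}+\sum_{t\in\mathcal T}\sum_{i\in\mathcal N}\big(h(\hat I^{i\omega}_{k,k+t+1})^++e(\hat I^{i\omega}_{k,k+t+1})^-\big)$ subject to, for all $t\in\mathcal T$, $v\in\mathcal V$, $i\in\mathcal N$: $\sum_{(0,j)\in\xi^+(0)}z^{0jv\omega}_{k,k+t}=\sum_{(j,0)\in\xi^-(0)}z^{j0v\omega}_{k,k+t}=1$;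 $\sum_{(i,j)\in\xi^+(i)}z^{ijv\omega}_{k,k+t}=\sum_{(j,i)\in\xi^-(i)}z^{jiv\omega}_{k,k+t}$; $\sum_{v\in\mathcal V}\sum_{(i,j)\in\xi^+(i)}z^{ijv\omega}_{k,k+t}\le1$; $u^{iv\omega}_{k,k+t}\le M\sum_{(i,j)\in\xi^+(i)}z^{ijv\omega}_{k,k+t}$; $\sum_{i\in\mathcal N}u^{iv\omega}_{k,k+t}\le Q$; $u^{iv\omega}_{k,k+t}\le I^{\max}-\hat I^{i\omega}_{k,k+t}$; $\hat I^{i\omega}_{k,k+t+1}=\hat I^{i\omega}_{k,k+t}+\sum_{v\in\mathcal V}u^{iv\omega}_{k,k+t}-\hat y^{i\omega}_{k,k+t}$ (with $\hat I^{i\omega}_{k,k}=\hat I^i_{k,k}$); subtour elimination $\sum_{i\in S}\sum_{j\in S,j\ne i}z^{ijv\omega}_{k,k+t}\le|S|-1$ for all $S\subset\mathcal N$ with $2\le|S|\le N$; $z^{ijv\omega}_{k,k+t}\in\{0,1\}$; $u^{iv\omega}_{k,k+t}\ge0$. Scenarios differ only in the demand values $\hat y^{i\omega}_{k,k+t}$. *)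

theory Defs
  imports Complex_Main
begin

text \<open>Retailers are 1..nR, the warehouse is node 0, vehicles are 1..nV.
  The decision epoch k is implicit: period index t stands for period k+t.\<close>

record irp =
  nR   :: nat
  nV   :: nat
  cost :: "nat \<Rightarrow> nat \<Rightarrow> real"
  cap  :: real
  Imax :: real
  hc   :: real
  ec   :: real
  bigM :: real
  I0   :: "nat \<Rightarrow> real"

definition retailers :: "irp \<Rightarrow> nat set" where
  "retailers P = {1..nR P}"

definition nodes :: "irp \<Rightarrow> nat set" where
  "nodes P = {0..nR P}"

definition edges :: "irp \<Rightarrow> (nat \<times> nat) set" where
  "edges P = {(i, j). i \<in> nodes P \<and> j \<in> nodes P \<and> i \<noteq> j}"

definition vehicles :: "irp \<Rightarrow> nat set" where
  "vehicles P = {1..nV P}"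

text \<open>Variables: z t i j v (edge (i,j) by vehicle v in period t), u t i v (delivery),
  Iv t i (inventory at the beginning of period t, t = 0..ell).
  y t i is the predicted demand of retailer i in period t (one scenario).\<close>

definition OS_feasible ::
  "irp \<Rightarrow> nat \<Rightarrow> (nat \<Rightarrow> nat \<Rightarrow> real) \<Rightarrow>
   (nat \<Rightarrow> nat \<Rightarrow> nat \<Rightarrow> nat \<Rightarrow> real) \<Rightarrow> (nat \<Rightarrow> nat \<Rightarrow> nat \<Rightarrow> real) \<Rightarrow>
   (nat \<Rightarrow> nat \<Rightarrow> real) \<Rightarrow> bool" where
  "OS_feasible P ell y z u Iv \<longleftrightarrow>
     (\<forall>t<ell. \<forall>v\<in>vehicles P. \<forall>(i, j)\<in>edges P. z t i j v \<in> {0, 1}) \<and>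
     (\<forall>t<ell. \<forall>v\<in>vehicles P. \<forall>i\<in>retailers P. u t i v \<ge> 0) \<and>
     (\<forall>t<ell. \<forall>v\<in>vehicles P.
        (\<Sum>j\<in>retailers P. z t 0 j v) = 1 \<and> (\<Sum>j\<in>retailers P. z t j 0 v) = 1) \<and>
     (\<forall>t<ell. \<forall>v\<in>vehicles P. \<forall>i\<in>retailers P.
        (\<Sum>j\<in>nodes P - {i}. z t i j v) = (\<Sum>j\<in>nodes P - {i}. z t j i v)) \<and>
     (\<forall>t<ell. \<forall>i\<in>retailers P.
        (\<Sum>v\<in>vehicles P. \<Sum>j\<in>nodes P - {i}. z t i j v) \<le> 1) \<and>
     (\<forall>t<ell. \<forall>v\<in>vehicles P. \<forall>i\<in>retailers P.
        u t i v \<le> bigM P * (\<Sum>j\<in>nodes P - {i}. z t i j v)) \<and>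
     (\<forall>t<ell. \<forall>v\<in>vehicles P. (\<Sum>i\<in>retailers P. u t i v) \<le> cap P) \<and>
     (\<forall>t<ell. \<forall>v\<in>vehicles P. \<forall>i\<in>retailers P. u t i v \<le> Imax P - Iv t i) \<and>
     (\<forall>i\<in>retailers P. Iv 0 i = I0 P i) \<and>
     (\<forall>t<ell. \<forall>i\<in>retailers P.
        Iv (Suc t) i = Iv t i + (\<Sum>v\<in>vehicles P. u t i v) - y t i) \<and>
     (\<forall>t<ell. \<forall>v\<in>vehicles P. \<forall>S. S \<subseteq> retailers P \<and> 2 \<le> card S \<longrightarrow>
        (\<Sum>i\<in>S. \<Sum>j\<in>S - {i}. z t i j v) \<le> real (card S) - 1)"

definition OS_obj ::
  "irp \<Rightarrow> nat \<Rightarrow> (nat \<Rightarrow> nat \<Rightarrow> nat \<Rightarrow> nat \<Rightarrow> real) \<Rightarrow> (nat \<Rightarrow> nat \<Rightarrow> real) \<Rightarrow> real" where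
  "OS_obj P ell z Iv =
     (\<Sum>t<ell. \<Sum>(i, j)\<in>edges P. \<Sum>v\<in>vehicles P. cost P i j * z t i j v) +
     (\<Sum>t<ell. \<Sum>i\<in>retailers P.
        hc P * max (Iv (Suc t) i) 0 + ec P * max (- Iv (Suc t) i) 0)"

definition OSu_feasible where
  "OSu_feasible P ell y ubar z u Iv \<longleftrightarrow>
     OS_feasible P ell y z u Iv \<and>
     (\<forall>i\<in>retailers P. \<forall>v\<in>vehicles P. u 0 i v = ubar i v)"

definition OSu_optimal where
  "OSu_optimal P ell y ubar z u Iv \<longleftrightarrow>
     OSu_feasible P ell y ubar z u Iv \<and>
     (\<forall>z' u' Iv'. OSu_feasible P ell y ubar z' u' Iv' \<longrightarrow>
        OS_obj P ell z Iv \<le> OS_obj P ell z' Iv')"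

definition first_routing ::
  "irp \<Rightarrow> (nat \<Rightarrow> nat \<Rightarrow> nat \<Rightarrow> nat \<Rightarrow> real) \<Rightarrow> nat \<Rightarrow> nat \<Rightarrow> nat \<Rightarrow> real" where
  "first_routing P z = (\<lambda>i j v. if (i, j) \<in> edges P \<and> v \<in> vehicles P then z 0 i j v else 0)"

definition Zstar where
  "Zstar P ell y ubar =
     {first_routing P z | z. \<exists>u Iv. OSu_optimal P ell y ubar z u Iv}"

end

theory Submission
  imports Defs
begin

text \<open>With the first-period deliveries fixed to \<open>ubar\<close>, the first-period routing enters
  the constraints of OS(\<omega>; ubar) only together with \<open>ubar\<close>, and the objective only through its
  travel cost, both independently of the scenario. So the first-period routing of any feasible
  solution of one scenario can be spliced into a feasible solution of another, changing the
  objective by the difference of first-period travel costs. An exchange argument then shows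
  that optimal first-period routings minimise this cost over all feasible solutions of every
  scenario, hence are optimal in every scenario.\<close>

definition splice_first_period ::
  "(nat \<Rightarrow> nat \<Rightarrow> nat \<Rightarrow> nat \<Rightarrow> real) \<Rightarrow> (nat \<Rightarrow> nat \<Rightarrow> nat \<Rightarrow> nat \<Rightarrow> real) \<Rightarrow>
   nat \<Rightarrow> nat \<Rightarrow> nat \<Rightarrow> nat \<Rightarrow> real" where
  "splice_first_period z\<^sub>0 z = (\<lambda>t. if t = 0 then z\<^sub>0 t else z t)"

definition first_period_cost :: "irp \<Rightarrow> (nat \<Rightarrow> nat \<Rightarrow> nat \<Rightarrow> nat \<Rightarrow> real) \<Rightarrow> real" where
  "first_period_cost P z = (\<Sum>(i, j)\<in>edges P. \<Sum>v\<in>vehicles P. cost P i j * z 0 i j v)"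

lemma first_routing_splice_first_period:
  "first_routing P (splice_first_period z\<^sub>0 z) = first_routing P z\<^sub>0"
  unfolding first_routing_def splice_first_period_def by simp

lemma OSu_feasible_splice_first_period:
  assumes "OSu_feasible P ell y ubar z\<^sub>0 u\<^sub>0 Iv\<^sub>0"
    and "OSu_feasible P ell y' ubar z u Iv"
  shows "OSu_feasible P ell y' ubar (splice_first_period z\<^sub>0 z) u Iv"
proof -
  have "\<forall>i\<in>retailers P. \<forall>v\<in>vehicles P. u 0 i v = u\<^sub>0 0 i v"
    using assms unfolding OSu_feasible_def by simp
  with assms show ?thesis
    unfolding OSu_feasible_def OS_feasible_def splice_first_period_def
    by (intro conjI) (auto split: if_splits)
qed

lemma OS_obj_splice_first_period:
  assumes "ell \<ge> 1"
  shows "OS_obj P ell (splice_first_period z\<^sub>0 z) Iv =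
    OS_obj P ell z Iv - first_period_cost P z + first_period_cost P z\<^sub>0"
proof -
  obtain m where m: "ell = Suc m"
    using assms by (cases ell) auto
  show ?thesis
    unfolding OS_obj_def first_period_cost_def m sum.lessThan_Suc_shift
    by (simp add: splice_first_period_def)
qed

lemma OSu_optimal_first_period_cost_le:
  assumes "ell \<ge> 1"
    and "OSu_optimal P ell y ubar z u Iv"
    and "OSu_feasible P ell y' ubar z' u' Iv'"
  shows "first_period_cost P z \<le> first_period_cost P z'"
proof -
  have "OSu_feasible P ell y ubar (splice_first_period z' z) u Iv"
    using assms(2,3) OSu_feasible_splice_first_period unfolding OSu_optimal_def by blast
  with assms(2) have "OS_obj P ell z Iv \<le> OS_obj P ell (splice_first_period z' z) Iv"
    unfolding OSu_optimal_def by blast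
  then show ?thesis
    using OS_obj_splice_first_period[OF assms(1)] by simp
qed

lemma Zstar_subset:
  assumes "ell \<ge> 1"
    and "\<exists>z u Iv. OSu_optimal P ell y' ubar z u Iv"
  shows "Zstar P ell y ubar \<subseteq> Zstar P ell y' ubar"
proof
  fix r
  assume "r \<in> Zstar P ell y ubar"
  then obtain z u Iv where r: "r = first_routing P z" and opt: "OSu_optimal P ell y ubar z u Iv"
    unfolding Zstar_def by blast
  obtain z' u' Iv' where opt': "OSu_optimal P ell y' ubar z' u' Iv'"
    using assms(2) by blast
  let ?z = "splice_first_period z z'"
  have "OSu_feasible P ell y' ubar ?z u' Iv'"
    using opt opt' OSu_feasible_splice_first_period unfolding OSu_optimal_def by blast
  moreover have "OS_obj P ell ?z Iv' \<le> OS_obj P ell z'' Iv''"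
    if "OSu_feasible P ell y' ubar z'' u'' Iv''" for z'' u'' Iv''
  proof -
    have "OS_obj P ell z' Iv' \<le> OS_obj P ell z'' Iv''"
      using opt' that unfolding OSu_optimal_def by blast
    moreover have "first_period_cost P z \<le> first_period_cost P z'"
      using OSu_optimal_first_period_cost_le[OF assms(1) opt] opt'
      unfolding OSu_optimal_def by blast
    ultimately show ?thesis
      using OS_obj_splice_first_period[OF assms(1)] by simp
  qed
  ultimately have "OSu_optimal P ell y' ubar ?z u' Iv'"
    unfolding OSu_optimal_def by blast
  moreover have "first_routing P ?z = r"
    using r first_routing_splice_first_period by simp
  ultimately show "r \<in> Zstar P ell y' ubar"
    unfolding Zstar_def by blast
qed

theorem proposition1:
  fixes P :: irp and ell :: nat and \<Omega> :: "'w set"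
    and y :: "'w \<Rightarrow> nat \<Rightarrow> nat \<Rightarrow> real"
    and ubar :: "nat \<Rightarrow> nat \<Rightarrow> real"
  assumes "ell \<ge> 1"
    and "finite \<Omega>"
    and "\<forall>(i, j)\<in>edges P. cost P i j \<ge> 0"
    and "hc P \<ge> 0" and "ec P \<ge> 0"
    and "\<forall>\<omega>\<in>\<Omega>. \<forall>t<ell. \<forall>i\<in>retailers P. y \<omega> t i \<ge> 0"
    and "\<forall>i\<in>retailers P. \<forall>v\<in>vehicles P. ubar i v \<ge> 0"
    and "\<forall>\<omega>\<in>\<Omega>. \<exists>z u Iv. OSu_optimal P ell (y \<omega>) ubar z u Iv"
  shows "\<forall>\<omega>\<in>\<Omega>. \<forall>\<omega>'\<in>\<Omega>. Zstar P ell (y \<omega>) ubar = Zstar P ell (y \<omega>') ubar"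
  using Zstar_subset[OF assms(1)] assms(8) by (meson subset_antisym)

end
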